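(* Let $N\ge1$, $n\ge1$, let $b$ be a positive integer, and let $\omega_*$, $\langle\cdot,\cdot\rangle_{b,N}$ and $\langle\!\langle\cdot,\cdot\rangle\!\rangle_{b,N}$ be as in the context. Then for all $f,g\in F_{N,n}$, $$\langle f,g\rangle_{b,N}=\langle\!\langle\omega_*(f),\omega_*(g)\rangle\!\rangle_{b,N}.$$
   Context: For $k\in\mathbb Z$, $\underline{k}\in\{1,\dots,N\}$, $\overline{k}\in\mathbb Z$ unique with $k=\underline{k}-N\overline{k}$. $V=\mathbb C^N$ with basis $v_1,\dots,v_N$. $K_{ij}$ swaps $z_i,z_j$, $P_{ij}$ swaps factors $i,j$ of $V^{\otimes n}$; $F_{N,n}=\{f\in\mathbb C[z_1^{\pm1},\dots,z_n^{\pm1}]\otimes V^{\otimes n}:K_{ij}f=-P_{ij}f\}$ with basis $\hat u_k=\sum_{w\in S_n}\mathrm{sign}(w)z_1^{\overline{k_{w(1)}}}\cdots z_n^{\overline{k_{w(n)}}}\otimes v_{\underline{k_{w(1)}}}\otimes\cdots\otimes v_{\underline{k_{w(n)}}}$, $k_1>\dots>k_n$. $\hat a_k=\sum_{w\in S_n}\mathrm{sign}(w)x_{w(1)}^{k_1}\cdots x_{w(n)}^{k_n}$; $\omega_*$ is the linear isomorphism from $F_{N,n}$ onto skew-symmetric Laurent polynomials in $x$ with $\omega_*(\hat u_k)=\hat a_k$ ($k_1>\dots>k_n$). Scalar products. On $\mathbb C[z^{\pm1}]\otimes V^{\otimes n}$: $\langle f\otimes u,g\otimes v\rangle'_{b,N}=\frac1{n!}\prod_j\oint\frac{dw_j}{2\pi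 iw_j}\prod_{i\ne j}(1-w_iw_j^{-1})^b\,\bar f(w^{-1})g(w)\cdot\langle u,v\rangle_N$ (unit circles; $\bar f$ has conjugated coefficients; $\langle\cdot,\cdot\rangle_N$ makes the tensor monomials $v_{a_1}\otimes\cdots\otimes v_{a_n}$ orthonormal), extended sesquilinearly; $\langle\cdot,\cdot\rangle_{b,N}$ is its restriction to $F_{N,n}$. For Laurent polynomials $f,g$ in $x$: $f^*(x)=\bar f(x_1^{-1},\dots,x_n^{-1})$, $[h]_1$ is the constant term, $\nabla(b,N)=\prod_{1\le i\ne j\le n}(1-x_i^Nx_j^{-N})^b$, and $\langle\!\langle f,g\rangle\!\rangle_{b,N}=\frac1{n!}[\nabla(b,N)f^*g]_1$. *)

theory Defs
  imports "HOL-Complex_Analysis.Complex_Analysis" "HOL-Library.Poly_Mapping"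
    "HOL-Combinatorics.Combinatorics"
begin

text \<open>Laurent polynomials (in variables indexed by nat, 0-based) with complex
  coefficients: finitely supported maps from integer exponent vectors to coefficients.\<close>
type_synonym lpoly = "(nat \<Rightarrow>\<^sub>0 int) \<Rightarrow>\<^sub>0 complex"

text \<open>An element of C[z^{\<pm>1}] \<otimes> V^{\<otimes>n}, written as sum over index tuples a of
  f_a \<otimes> v_{a_1} \<otimes> ... \<otimes> v_{a_n}; we store the map a \<mapsto> f_a.\<close>
type_synonym tens = "nat list \<Rightarrow> lpoly"

definition lmono :: "(nat \<Rightarrow>\<^sub>0 int) \<Rightarrow> lpoly" where
  "lmono m = Poly_Mapping.single m 1"

definition lconst :: "complex \<Rightarrow> lpoly" where
  "lconst c = Poly_Mapping.single 0 c"

definition xpow :: "nat \<Rightarrow> int \<Rightarrow> lpoly" where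
  "xpow j e = lmono (Poly_Mapping.single j e)"

definition lvars_in :: "nat \<Rightarrow> lpoly \<Rightarrow> bool" where
  "lvars_in n p \<longleftrightarrow> (\<forall>m\<in>Poly_Mapping.keys p. Poly_Mapping.keys m \<subseteq> {0..<n})"

definition idx_tuples :: "nat \<Rightarrow> nat \<Rightarrow> nat list set" where
  "idx_tuples N n = {a. length a = n \<and> set a \<subseteq> {1..N}}"

definition tens_space :: "nat \<Rightarrow> nat \<Rightarrow> tens \<Rightarrow> bool" where
  "tens_space N n f \<longleftrightarrow> (\<forall>a. a \<notin> idx_tuples N n \<longrightarrow> f a = 0) \<and> (\<forall>a. lvars_in n (f a))"

definition Kop :: "nat \<Rightarrow> nat \<Rightarrow> tens \<Rightarrow> tens" where
  "Kop i j f = (\<lambda>a. Poly_Mapping.map_key (Poly_Mapping.map_key (Transposition.transpose i j)) (f a))"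

definition Pop :: "nat \<Rightarrow> nat \<Rightarrow> tens \<Rightarrow> tens" where
  "Pop i j f = (\<lambda>a. f (a[i := a ! j, j := a ! i]))"

definition F_space :: "nat \<Rightarrow> nat \<Rightarrow> tens \<Rightarrow> bool" where
  "F_space N n f \<longleftrightarrow> tens_space N n f \<and>
     (\<forall>i<n. \<forall>j<n. i \<noteq> j \<longrightarrow> Kop i j f = - Pop i j f)"

text \<open>underline k \<in> {1..N} and overline k with k = underline k - N * overline k\<close>
definition ul :: "nat \<Rightarrow> int \<Rightarrow> int" where
  "ul N k = (k - 1) mod int N + 1"

definition ol :: "nat \<Rightarrow> int \<Rightarrow> int" where
  "ol N k = (ul N k - k) div int N"

definition uhat :: "nat \<Rightarrow> nat \<Rightarrow> int list \<Rightarrow> tens" where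
  "uhat N n k = (\<lambda>a. \<Sum>w | w permutes {0..<n}.
      of_int (sign w) *
      (if a = map (\<lambda>i. nat (ul N (k ! w i))) [0..<n]
       then lmono (\<Sum>i<n. Poly_Mapping.single i (ol N (k ! w i))) else 0))"

definition ahat :: "nat \<Rightarrow> int list \<Rightarrow> lpoly" where
  "ahat n k = (\<Sum>w | w permutes {0..<n}. of_int (sign w) * (\<Prod>i<n. xpow (w i) (k ! i)))"

definition peval :: "lpoly \<Rightarrow> (nat \<Rightarrow> complex) \<Rightarrow> complex" where
  "peval p w = (\<Sum>m\<in>Poly_Mapping.keys p. Poly_Mapping.lookup p m * (\<Prod>j\<in>Poly_Mapping.keys m. w j powi Poly_Mapping.lookup m j))"

definition conjc :: "lpoly \<Rightarrow> lpoly" where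
  "conjc p = (\<Sum>m\<in>Poly_Mapping.keys p. Poly_Mapping.single m (cnj (Poly_Mapping.lookup p m)))"

definition pstar :: "lpoly \<Rightarrow> lpoly" where
  "pstar p = (\<Sum>m\<in>Poly_Mapping.keys p. Poly_Mapping.single (- m) (cnj (Poly_Mapping.lookup p m)))"

fun torus_int :: "nat \<Rightarrow> ((nat \<Rightarrow> complex) \<Rightarrow> complex) \<Rightarrow> complex" where
  "torus_int 0 F = F (\<lambda>_. 1)"
| "torus_int (Suc n) F = torus_int n (\<lambda>w.
      contour_integral (circlepath 0 1) (\<lambda>u. F (w(n := u)) / (2 * pi * \<i> * u)))"

text \<open>\<langle>f,g\<rangle>'_{b,N}, extended sesquilinearly using orthonormality of the tensor basis\<close>
definition ip' :: "nat \<Rightarrow> nat \<Rightarrow> nat \<Rightarrow> tens \<Rightarrow> tens \<Rightarrow> complex" where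
  "ip' N b n f g = (1 / fact n) * (\<Sum>a\<in>idx_tuples N n.
     torus_int n (\<lambda>w. (\<Prod>i<n. \<Prod>j\<in>{0..<n} - {i}. (1 - w i / w j) ^ b)
        * peval (conjc (f a)) (\<lambda>j. inverse (w j)) * peval (g a) w))"

definition Nabla :: "nat \<Rightarrow> nat \<Rightarrow> nat \<Rightarrow> lpoly" where
  "Nabla N b n = (\<Prod>i<n. \<Prod>j\<in>{0..<n} - {i}. (1 - xpow i (int N) * xpow j (- int N)) ^ b)"

definition ipp :: "nat \<Rightarrow> nat \<Rightarrow> nat \<Rightarrow> lpoly \<Rightarrow> lpoly \<Rightarrow> complex" where
  "ipp N b n p q = (1 / fact n) * Poly_Mapping.lookup (Nabla N b n * pstar p * q) 0"

end

theory Submission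
  imports Defs
begin

text \<open>
  Evaluated monomial by monomial, the torus integral extracts constant terms, so
  \<open>\<langle>f, g\<rangle>\<^sub>b\<^sub>,\<^sub>N = (1/n!) \<Sum>\<^sub>a [\<Delta> f\<^sub>a\<^sup>* g\<^sub>a]\<^sub>1\<close> with \<open>\<Delta> = \<Prod>\<^sub>i\<^sub>\<noteq>\<^sub>j (1 - z\<^sub>i/z\<^sub>j)\<^sup>b\<close>.
  The map \<open>omega0\<close> sending \<open>z\<^sup>m \<otimes> v\<^sub>a\<close> to \<open>x\<^sup>a\<^sup>-\<^sup>N\<^sup>m\<close> is, on each component, the ring
  homomorphism \<open>z\<^sub>j \<mapsto> x\<^sub>j\<^sup>-\<^sup>N\<close> followed by multiplication with \<open>x\<^sup>a\<close>; the homomorphism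
  takes \<open>\<Delta>\<close> to \<open>\<nabla>(b,N)\<close>, and since distinct \<open>a, a' \<in> {1..N}\<^sup>n\<close> differ in some
  coordinate by a non-multiple of \<open>N\<close>, only the diagonal terms \<open>a = a'\<close> contribute to
  \<open>[\<nabla>(b,N) omega0(f)\<^sup>* omega0(g)]\<^sub>1\<close>.
  Antisymmetry makes the coefficients of \<open>f \<in> F\<^sub>N\<^sub>,\<^sub>n\<close> an alternating function of the index
  \<open>k = a - N m\<close>, so \<open>f\<close> is a finite combination of the \<open>uhat N n k\<close> with \<open>k\<close> decreasing;
  as \<open>omega0\<close> is linear and sends \<open>uhat N n k\<close> to \<open>ahat n k\<close>, it coincides with \<open>\<omega>\<^sub>*\<close>
  on \<open>F\<^sub>N\<^sub>,\<^sub>n\<close>.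
\<close>

section \<open>Additive maps on finitely supported functions\<close>

lemma poly_mapping_sum_single:
  "p = (\<Sum>m\<in>Poly_Mapping.keys p. Poly_Mapping.single m (Poly_Mapping.lookup p m))"
  by (rule poly_mapping_eqI) (auto simp: lookup_sum lookup_single when_def in_keys_iff)

lemma additive_zero:
  fixes \<Phi> :: "'a::monoid_add \<Rightarrow> 'b::cancel_comm_monoid_add"
  assumes "\<And>p q. \<Phi> (p + q) = \<Phi> p + \<Phi> q"
  shows "\<Phi> 0 = 0"
  using assms[of 0 0] by simp

lemma additive_sum:
  fixes \<Phi> :: "'a::comm_monoid_add \<Rightarrow> 'b::cancel_comm_monoid_add"
  assumes "\<And>p q. \<Phi> (p + q) = \<Phi> p + \<Phi> q"
  shows "\<Phi> (\<Sum>x\<in>S. f x) = (\<Sum>x\<in>S. \<Phi> (f x))"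
  using sum_comp_morphism[of \<Phi> f S, OF additive_zero[of \<Phi>, OF assms] assms] by (simp add: comp_def)

lemma additive_diff:
  fixes \<Phi> :: "'a::ab_group_add \<Rightarrow> 'b::ab_group_add"
  assumes "\<And>p q. \<Phi> (p + q) = \<Phi> p + \<Phi> q"
  shows "\<Phi> (p - q) = \<Phi> p - \<Phi> q"
  by (metis assms add_diff_cancel diff_add_cancel)

lemma additive_eq_if_eq_on_single:
  fixes \<Phi> \<Psi> :: "('a \<Rightarrow>\<^sub>0 'b::comm_monoid_add) \<Rightarrow> 'c::cancel_comm_monoid_add"
  assumes "\<And>p q. \<Phi> (p + q) = \<Phi> p + \<Phi> q" "\<And>p q. \<Psi> (p + q) = \<Psi> p + \<Psi> q"
    and "\<And>m c. \<Phi> (Poly_Mapping.single m c) = \<Psi> (Poly_Mapping.single m c)"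
  shows "\<Phi> p = \<Psi> p"
  using poly_mapping_sum_single[of p] by (metis (no_types, lifting) additive_sum assms sum.cong)

lemma additive_multiplicative_if_on_single:
  fixes \<Phi> :: "('a::monoid_add \<Rightarrow>\<^sub>0 'b::semiring_0) \<Rightarrow> 'c::semiring_0_cancel"
  assumes add: "\<And>p q. \<Phi> (p + q) = \<Phi> p + \<Phi> q"
    and single: "\<And>m c m' d. \<Phi> (Poly_Mapping.single m c * Poly_Mapping.single m' d)
                  = \<Phi> (Poly_Mapping.single m c) * \<Phi> (Poly_Mapping.single m' d)"
  shows "\<Phi> (p * q) = \<Phi> p * \<Phi> q"
proof -
  let ?P = "\<lambda>m. Poly_Mapping.single m (Poly_Mapping.lookup p m)"
  let ?Q = "\<lambda>m. Poly_Mapping.single m (Poly_Mapping.lookup q m)"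
  have "\<Phi> (p * q) = \<Phi> ((\<Sum>m\<in>Poly_Mapping.keys p. ?P m) * (\<Sum>m\<in>Poly_Mapping.keys q. ?Q m))"
    using poly_mapping_sum_single[of p] poly_mapping_sum_single[of q] by simp
  also have "\<dots> = (\<Sum>m\<in>Poly_Mapping.keys p. \<Sum>m'\<in>Poly_Mapping.keys q. \<Phi> (?P m) * \<Phi> (?Q m'))"
    by (simp add: sum_product additive_sum[OF add] single)
  also have "\<dots> = \<Phi> (\<Sum>m\<in>Poly_Mapping.keys p. ?P m) * \<Phi> (\<Sum>m\<in>Poly_Mapping.keys q. ?Q m)"
    by (simp add: sum_product additive_sum[OF add])
  also have "\<dots> = \<Phi> p * \<Phi> q"
    using poly_mapping_sum_single[of p, symmetric] poly_mapping_sum_single[of q, symmetric] by simp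
  finally show ?thesis .
qed

definition pushforward :: "('a \<Rightarrow> 'b) \<Rightarrow> ('c::zero \<Rightarrow> 'd::comm_monoid_add) \<Rightarrow> ('a \<Rightarrow>\<^sub>0 'c) \<Rightarrow> 'b \<Rightarrow>\<^sub>0 'd" where
  "pushforward h \<phi> p =
     (\<Sum>m\<in>Poly_Mapping.keys p. Poly_Mapping.single (h m) (\<phi> (Poly_Mapping.lookup p m)))"

lemma pushforward_superset:
  assumes "finite S" "Poly_Mapping.keys p \<subseteq> S" "\<phi> 0 = 0"
  shows "pushforward h \<phi> p = (\<Sum>m\<in>S. Poly_Mapping.single (h m) (\<phi> (Poly_Mapping.lookup p m)))"
  unfolding pushforward_def
  by (rule sum.mono_neutral_left) (use assms in \<open>auto simp: in_keys_iff\<close>)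

lemma pushforward_add:
  fixes \<phi> :: "'c::comm_monoid_add \<Rightarrow> 'd::cancel_comm_monoid_add"
  assumes "\<And>x y. \<phi> (x + y) = \<phi> x + \<phi> y"
  shows "pushforward h \<phi> (p + q) = pushforward h \<phi> p + pushforward h \<phi> q"
proof -
  let ?S = "Poly_Mapping.keys p \<union> Poly_Mapping.keys q"
  let ?push = "\<lambda>r. \<Sum>m\<in>?S. Poly_Mapping.single (h m) (\<phi> (Poly_Mapping.lookup r m))"
  have zero: "\<phi> 0 = 0" by (rule additive_zero[OF assms])
  have "pushforward h \<phi> r = ?push r" if "Poly_Mapping.keys r \<subseteq> ?S" for r
    by (rule pushforward_superset) (use that zero in auto)
  moreover have "?push (p + q) = ?push p + ?push q"
    by (simp add: lookup_add assms single_add sum.distrib)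
  ultimately show ?thesis
    using keys_add[of p q] by auto
qed

lemma pushforward_single:
  "\<phi> 0 = 0 \<Longrightarrow> pushforward h \<phi> (Poly_Mapping.single m c) = Poly_Mapping.single (h m) (\<phi> c)"
  by (cases "c = 0") (auto simp: pushforward_def)

lemma pushforward_mult:
  fixes \<phi> :: "'c::semiring_0 \<Rightarrow> 'd::comm_semiring_0_cancel" and h :: "'a::monoid_add \<Rightarrow> 'b::monoid_add"
  assumes "\<And>x y. \<phi> (x + y) = \<phi> x + \<phi> y" "\<And>x y. \<phi> (x * y) = \<phi> x * \<phi> y"
    and "\<And>x y. h (x + y) = h x + h y"
  shows "pushforward h \<phi> (p * q) = pushforward h \<phi> p * pushforward h \<phi> q"
proof -
  have "\<phi> 0 = 0" by (rule additive_zero[OF assms(1)])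
  show ?thesis
    by (rule additive_multiplicative_if_on_single)
       (simp_all add: pushforward_add pushforward_single mult_single assms \<open>\<phi> 0 = 0\<close>)
qed

lemma lookup_map_key:
  assumes "inj f"
  shows "Poly_Mapping.lookup (Poly_Mapping.map_key f p) k = Poly_Mapping.lookup p (f k)"
proof -
  have [transfer_rule]: "inj f" by fact
  show ?thesis by transfer simp
qed

lemma lookup_of_int_mult:
  fixes m :: "'a::monoid_add \<Rightarrow>\<^sub>0 'b::ring_1"
  shows "Poly_Mapping.lookup (of_int c * m) k = of_int c * Poly_Mapping.lookup m k"
  by (simp add: map.rep_eq when_def flip: single_of_int mult_map_scale_conv_mult)

section \<open>Laurent polynomials\<close>

lemma lmono_mult: "lmono d * lmono e = lmono (d + e)"
  by (simp add: lmono_def mult_single)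

lemma lmono_zero [simp]: "lmono 0 = 1"
  by (simp add: lmono_def)

lemma lookup_lmono_mult: "Poly_Mapping.lookup (lmono d * q) k = Poly_Mapping.lookup q (k - d)"
proof -
  have "lmono d * q = (\<Sum>m\<in>Poly_Mapping.keys q. Poly_Mapping.single (d + m) (Poly_Mapping.lookup q m))"
    by (subst poly_mapping_sum_single[of q]) (simp add: sum_distrib_left lmono_def mult_single)
  then have "Poly_Mapping.lookup (lmono d * q) k
      = (\<Sum>m\<in>Poly_Mapping.keys q. Poly_Mapping.lookup q m when m = k - d)"
    by (simp add: lookup_sum lookup_single when_def eq_diff_eq add.commute)
  also have "\<dots> = Poly_Mapping.lookup q (k - d)"
    by (cases "k - d \<in> Poly_Mapping.keys q") (auto simp: when_def in_keys_iff)
  finally show ?thesis .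
qed

lemma lookup_lconst_mult: "Poly_Mapping.lookup (lconst c * q) k = c * Poly_Mapping.lookup q k"
  by (simp add: lconst_def flip: mult_map_scale_conv_mult) (simp add: map.rep_eq when_def)

lemma of_int_eq_lconst: "(of_int z :: lpoly) = lconst (of_int z)"
  by (simp add: lconst_def)

lemma prod_xpow: "(\<Prod>i\<in>S. xpow (h i) (e i)) = lmono (\<Sum>i\<in>S. Poly_Mapping.single (h i) (e i))"
  by (induction S rule: infinite_finite_induct) (auto simp: xpow_def lmono_mult)

text \<open>The substitution \<open>x\<^sub>j \<mapsto> x\<^sub>j\<^sup>c\<close>; in the ring \<open>nat \<Rightarrow>\<^sub>0 int\<close>, multiplying by \<open>of_int c\<close>
  scales an exponent vector by \<open>c\<close>.\<close>
definition subst_power :: "int \<Rightarrow> lpoly \<Rightarrow> lpoly" where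
  "subst_power c = pushforward (\<lambda>m. of_int c * m) (\<lambda>x. x)"

lemma subst_power_add: "subst_power c (p + q) = subst_power c p + subst_power c q"
  unfolding subst_power_def by (rule pushforward_add) simp

lemma subst_power_mult: "subst_power c (p * q) = subst_power c p * subst_power c q"
  unfolding subst_power_def by (rule pushforward_mult) (simp_all add: distrib_left)

lemma subst_power_single:
  "subst_power c (Poly_Mapping.single m a) = Poly_Mapping.single (of_int c * m) a"
  unfolding subst_power_def by (simp add: pushforward_single)

lemma subst_power_zero [simp]: "subst_power c 0 = 0"
  by (simp add: subst_power_def pushforward_def)

lemma subst_power_lmono: "subst_power c (lmono m) = lmono (of_int c * m)"
  by (simp add: lmono_def subst_power_single)

lemma subst_power_lconst [simp]: "subst_power c (lconst a) = lconst a"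
  by (simp add: lconst_def subst_power_single)

lemma subst_power_one [simp]: "subst_power c 1 = 1"
  using subst_power_lconst[of c 1] by (simp add: lconst_def)

lemma subst_power_xpow: "subst_power c (xpow j e) = xpow j (c * e)"
  by (simp add: xpow_def subst_power_lmono mult_single flip: single_of_int)

lemma subst_power_sum: "subst_power c (\<Sum>i\<in>S. F i) = (\<Sum>i\<in>S. subst_power c (F i))"
  by (rule additive_sum) (rule subst_power_add)

lemma subst_power_diff: "subst_power c (p - q) = subst_power c p - subst_power c q"
  by (rule additive_diff) (rule subst_power_add)

lemma subst_power_prod: "subst_power c (\<Prod>i\<in>S. F i) = (\<Prod>i\<in>S. subst_power c (F i))"
  by (induction S rule: infinite_finite_induct) (auto simp: subst_power_mult)

lemma subst_power_power: "subst_power c (p ^ k) = subst_power c p ^ k"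
  by (induction k) (auto simp: subst_power_mult)

lemma lookup_subst_power:
  "Poly_Mapping.lookup (subst_power c p) x
     = (\<Sum>m\<in>Poly_Mapping.keys p. Poly_Mapping.lookup p m when x = of_int c * m)"
  by (simp add: subst_power_def pushforward_def lookup_sum lookup_single when_def eq_commute)

lemma lookup_subst_power_zero:
  assumes "c \<noteq> 0"
  shows "Poly_Mapping.lookup (subst_power c p) 0 = Poly_Mapping.lookup p 0"
proof -
  have "0 = of_int c * m \<longleftrightarrow> m = 0" for m :: "nat \<Rightarrow>\<^sub>0 int"
    using assms by (auto simp: poly_mapping_eq_iff fun_eq_iff lookup_of_int_mult)
  then show ?thesis
    by (cases "0 \<in> Poly_Mapping.keys p") (auto simp: lookup_subst_power when_def in_keys_iff)
qed

lemma lookup_subst_power_not_dvd: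
  assumes "\<not> c dvd Poly_Mapping.lookup x i"
  shows "Poly_Mapping.lookup (subst_power c p) x = 0"
proof -
  have "x \<noteq> of_int c * m" for m
    using assms by (auto simp: lookup_of_int_mult)
  then show ?thesis
    by (simp add: lookup_subst_power)
qed

lemma pstar_eq_pushforward: "pstar = pushforward uminus cnj"
  by (simp add: fun_eq_iff pstar_def pushforward_def)

lemma conjc_eq_pushforward: "conjc = pushforward (\<lambda>m. m) cnj"
  by (simp add: fun_eq_iff conjc_def pushforward_def)

lemma pstar_add: "pstar (p + q) = pstar p + pstar q"
  unfolding pstar_eq_pushforward by (rule pushforward_add) simp

lemma pstar_mult: "pstar (p * q) = pstar p * pstar q"
  unfolding pstar_eq_pushforward by (rule pushforward_mult) simp_all

lemma pstar_single: "pstar (Poly_Mapping.single m c) = Poly_Mapping.single (- m) (cnj c)"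
  unfolding pstar_eq_pushforward by (simp add: pushforward_single)

lemma pstar_lmono: "pstar (lmono m) = lmono (- m)"
  by (simp add: lmono_def pstar_single)

lemma pstar_sum: "pstar (\<Sum>i\<in>S. F i) = (\<Sum>i\<in>S. pstar (F i))"
  by (rule additive_sum) (rule pstar_add)

lemma pstar_subst_power: "pstar (subst_power c p) = subst_power c (pstar p)"
  by (rule additive_eq_if_eq_on_single[where \<Phi> = "\<lambda>p. pstar (subst_power c p)"])
     (simp_all add: pstar_add subst_power_add pstar_single subst_power_single)

lemma lvars_in_add: "lvars_in n p \<Longrightarrow> lvars_in n q \<Longrightarrow> lvars_in n (p + q)"
  using keys_add[of p q] by (auto simp: lvars_in_def)

lemma lvars_in_diff: "lvars_in n p \<Longrightarrow> lvars_in n q \<Longrightarrow> lvars_in n (p - q)"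
  using keys_diff[of p q] by (auto simp: lvars_in_def)

lemma lvars_in_mult:
  assumes "lvars_in n p" "lvars_in n q"
  shows "lvars_in n (p * q)"
  unfolding lvars_in_def
proof
  fix m assume "m \<in> Poly_Mapping.keys (p * q)"
  then obtain x y where "m = x + y" "x \<in> Poly_Mapping.keys p" "y \<in> Poly_Mapping.keys q"
    using keys_mult[of p q] by blast
  then show "Poly_Mapping.keys m \<subseteq> {0..<n}"
    using assms keys_add[of x y] unfolding lvars_in_def by blast
qed

lemma lvars_in_one: "lvars_in n 1"
  by (simp add: lvars_in_def)

lemma lvars_in_lmono: "Poly_Mapping.keys m \<subseteq> {0..<n} \<Longrightarrow> lvars_in n (lmono m)"
  by (simp add: lvars_in_def lmono_def)

lemma lvars_in_lconst: "lvars_in n (lconst c)"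
  by (simp add: lvars_in_def lconst_def)

lemma lvars_in_xpow: "i < n \<Longrightarrow> lvars_in n (xpow i e)"
  by (simp add: lvars_in_def xpow_def lmono_def)

lemma lvars_in_power: "lvars_in n p \<Longrightarrow> lvars_in n (p ^ k)"
  by (induction k) (auto simp: lvars_in_one lvars_in_mult)

lemma lvars_in_prod: "(\<And>i. i \<in> S \<Longrightarrow> lvars_in n (F i)) \<Longrightarrow> lvars_in n (\<Prod>i\<in>S. F i)"
  by (induction S rule: infinite_finite_induct) (auto simp: lvars_in_one lvars_in_mult)

lemma lvars_in_sum: "(\<And>i. i \<in> S \<Longrightarrow> lvars_in n (F i)) \<Longrightarrow> lvars_in n (\<Sum>i\<in>S. F i)"
proof (induction S rule: infinite_finite_induct)
  case (insert x F)
  then show ?case by (simp add: lvars_in_add)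
qed (auto simp: lvars_in_def)

lemma lvars_in_pstar: "lvars_in n p \<Longrightarrow> lvars_in n (pstar p)"
  unfolding pstar_def by (rule lvars_in_sum) (auto simp: lvars_in_def)

section \<open>Evaluation and integration over the torus\<close>

definition monomial_eval :: "(nat \<Rightarrow>\<^sub>0 int) \<Rightarrow> (nat \<Rightarrow> complex) \<Rightarrow> complex" where
  "monomial_eval m w = (\<Prod>j\<in>Poly_Mapping.keys m. w j powi Poly_Mapping.lookup m j)"

lemma monomial_eval_superset:
  assumes "finite S" "Poly_Mapping.keys m \<subseteq> S"
  shows "monomial_eval m w = (\<Prod>j\<in>S. w j powi Poly_Mapping.lookup m j)"
  unfolding monomial_eval_def
  by (rule prod.mono_neutral_left) (use assms in \<open>auto simp: in_keys_iff\<close>)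

lemma monomial_eval_add:
  assumes "\<forall>j. w j \<noteq> 0"
  shows "monomial_eval (m + m') w = monomial_eval m w * monomial_eval m' w"
proof -
  let ?S = "Poly_Mapping.keys m \<union> Poly_Mapping.keys m'"
  have "monomial_eval r w = (\<Prod>j\<in>?S. w j powi Poly_Mapping.lookup r j)" if "Poly_Mapping.keys r \<subseteq> ?S" for r
    by (rule monomial_eval_superset) (use that in auto)
  then show ?thesis
    using keys_add[of m m'] by (simp add: lookup_add power_int_add assms prod.distrib)
qed

lemma monomial_eval_single: "monomial_eval (Poly_Mapping.single j e) w = w j powi e"
  by (cases "e = 0") (auto simp: monomial_eval_def)

lemma monomial_eval_inverse: "monomial_eval m (\<lambda>j. inverse (w j)) = monomial_eval (- m) w"
  by (simp add: monomial_eval_def power_int_inverse power_int_minus)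

lemma peval_eq_sum:
  "peval p w = (\<Sum>m\<in>Poly_Mapping.keys p. Poly_Mapping.lookup p m * monomial_eval m w)"
  by (simp add: peval_def monomial_eval_def)

lemma peval_superset:
  assumes "finite S" "Poly_Mapping.keys p \<subseteq> S"
  shows "peval p w = (\<Sum>m\<in>S. Poly_Mapping.lookup p m * monomial_eval m w)"
  unfolding peval_eq_sum
  by (rule sum.mono_neutral_left) (use assms in \<open>auto simp: in_keys_iff\<close>)

lemma peval_add: "peval (p + q) w = peval p w + peval q w"
proof -
  let ?S = "Poly_Mapping.keys p \<union> Poly_Mapping.keys q"
  have "peval r w = (\<Sum>m\<in>?S. Poly_Mapping.lookup r m * monomial_eval m w)" if "Poly_Mapping.keys r \<subseteq> ?S" for r
    by (rule peval_superset) (use that in auto)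
  then show ?thesis
    using keys_add[of p q] by (simp add: lookup_add sum.distrib distrib_right)
qed

lemma peval_single: "peval (Poly_Mapping.single m c) w = c * monomial_eval m w"
  by (cases "c = 0") (auto simp: peval_eq_sum)

lemma peval_mult:
  assumes "\<forall>j. w j \<noteq> 0"
  shows "peval (p * q) w = peval p w * peval q w"
  by (rule additive_multiplicative_if_on_single[where \<Phi> = "\<lambda>p. peval p w"])
     (simp_all add: peval_add peval_single mult_single monomial_eval_add assms)

lemma peval_diff: "peval (p - q) w = peval p w - peval q w"
  by (rule additive_diff[where \<Phi> = "\<lambda>p. peval p w"]) (rule peval_add)

lemma peval_sum: "peval (\<Sum>i\<in>S. F i) w = (\<Sum>i\<in>S. peval (F i) w)"
  by (rule additive_sum[where \<Phi> = "\<lambda>p. peval p w"]) (rule peval_add)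

lemma peval_one [simp]: "peval 1 w = 1"
  using peval_single[of 0 1 w] by (simp add: monomial_eval_def)

lemma peval_xpow [simp]: "peval (xpow j e) w = w j powi e"
  by (simp add: xpow_def lmono_def peval_single monomial_eval_single)

lemma peval_prod:
  assumes "\<forall>j. w j \<noteq> 0"
  shows "peval (\<Prod>i\<in>S. F i) w = (\<Prod>i\<in>S. peval (F i) w)"
  by (induction S rule: infinite_finite_induct) (auto simp: peval_mult assms)

lemma peval_power:
  assumes "\<forall>j. w j \<noteq> 0"
  shows "peval (p ^ k) w = peval p w ^ k"
  by (induction k) (auto simp: peval_mult assms)

lemma peval_conjc_inverse: "peval (conjc p) (\<lambda>j. inverse (w j)) = peval (pstar p) w"
  by (simp add: conjc_eq_pushforward pstar_eq_pushforward pushforward_def peval_sum peval_single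
      monomial_eval_inverse)

lemma circlepath_integral_power_int:
  "((\<lambda>u. u powi k / (2 * pi * \<i> * u)) has_contour_integral (if k = 0 then 1 else 0)) (circlepath 0 1)"
proof (cases "k = 0")
  case True
  have "((\<lambda>u. 1 / (2 * of_real pi * \<i>) / (u - 0)) has_contour_integral
          2 * of_real pi * \<i> * (1 / (2 * of_real pi * \<i>))) (circlepath 0 1)"
    by (rule Cauchy_integral_circlepath_simple) auto
  then have "((\<lambda>u. 1 / (2 * of_real pi * \<i>) / (u - 0)) has_contour_integral 1) (circlepath 0 1)"
    by simp
  then show ?thesis
    using True by (rule_tac has_contour_integral_eq) (auto simp: field_simps)
next
  case False
  let ?F = "\<lambda>u. u powi k / (of_int k * (2 * pi * \<i>))"
  have deriv: "(?F has_field_derivative u powi k / (2 * pi * \<i> * u)) (at u within - {0})"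
    if "u \<in> - {0}" for u
  proof -
    have "((\<lambda>u. u powi k) has_field_derivative of_int k * u powi (k - 1) * 1) (at u within - {0})"
      by (rule DERIV_power_int) (use that in \<open>auto intro: derivative_eq_intros\<close>)
    then show ?thesis
      using False that by (auto dest: DERIV_cdivide[where c = "of_int k * (2 * pi * \<i>)"]
                              simp: power_int_diff field_simps)
  qed
  have "((\<lambda>u. u powi k / (2 * pi * \<i> * u)) has_contour_integral
          ?F (pathfinish (circlepath 0 1)) - ?F (pathstart (circlepath 0 1))) (circlepath 0 1)"
    by (rule contour_integral_primitive[OF deriv]) (auto simp: path_image_circlepath_nonneg)
  then show ?thesis
    using False by simp
qed

lemma torus_int_cong:
  assumes "\<And>w. \<forall>j. w j \<noteq> 0 \<Longrightarrow> F w = G w"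
  shows "torus_int n F = torus_int n G"
  using assms
proof (induction n arbitrary: F G)
  case (Suc n)
  have "contour_integral (circlepath 0 1) (\<lambda>u. F (w(n := u)) / (2 * pi * \<i> * u))
      = contour_integral (circlepath 0 1) (\<lambda>u. G (w(n := u)) / (2 * pi * \<i> * u))"
    if w: "\<forall>j. w j \<noteq> 0" for w
  proof (rule contour_integral_eq)
    fix u assume "u \<in> path_image (circlepath 0 1)"
    then have "\<forall>j. (w(n := u)) j \<noteq> 0"
      using w by (auto simp: path_image_circlepath_nonneg)
    then have "F (w(n := u)) = G (w(n := u))"
      by (rule Suc.prems)
    then show "F (w(n := u)) / (2 * pi * \<i> * u) = G (w(n := u)) / (2 * pi * \<i> * u)"
      by simp
  qed
  then show ?case
    by (simp only: torus_int.simps) (rule Suc.IH)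
qed simp

lemma monomial_eval_fun_upd:
  "monomial_eval m (w(j := u)) = u powi Poly_Mapping.lookup m j * monomial_eval m (w(j := 1))"
proof (cases "j \<in> Poly_Mapping.keys m")
  case True
  then show ?thesis
    unfolding monomial_eval_def by (simp add: prod.remove[OF finite_keys True])
next
  case False
  then show ?thesis
    unfolding monomial_eval_def by (auto simp: in_keys_iff intro!: prod.cong)
qed

definition var_free_part :: "nat \<Rightarrow> lpoly \<Rightarrow> lpoly" where
  "var_free_part j P = (\<Sum>m | m \<in> Poly_Mapping.keys P \<and> Poly_Mapping.lookup m j = 0.
                          Poly_Mapping.single m (Poly_Mapping.lookup P m))"

lemma lookup_var_free_part:
  "Poly_Mapping.lookup (var_free_part j P) m = (Poly_Mapping.lookup P m when Poly_Mapping.lookup m j = 0)"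
proof -
  have "Poly_Mapping.lookup (var_free_part j P) m
      = (\<Sum>m' | m' \<in> Poly_Mapping.keys P \<and> Poly_Mapping.lookup m' j = 0.
           if m' = m then Poly_Mapping.lookup P m else 0)"
    by (auto simp: var_free_part_def lookup_sum lookup_single when_def intro!: sum.cong)
  then show ?thesis
    by (simp add: when_def in_keys_iff)
qed

lemma lvars_in_var_free_part:
  assumes "lvars_in (Suc n) P"
  shows "lvars_in n (var_free_part n P)"
  unfolding lvars_in_def
proof
  fix m assume "m \<in> Poly_Mapping.keys (var_free_part n P)"
  then have "m \<in> Poly_Mapping.keys P" and n: "n \<notin> Poly_Mapping.keys m"
    by (auto simp: in_keys_iff lookup_var_free_part)
  then have "Poly_Mapping.keys m \<subseteq> {0..<Suc n}"
    using assms by (auto simp: lvars_in_def)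
  then show "Poly_Mapping.keys m \<subseteq> {0..<n}"
    using n by (auto simp: less_Suc_eq)
qed

lemma contour_integral_peval:
  "contour_integral (circlepath 0 1) (\<lambda>u. peval P (w(j := u)) / (2 * pi * \<i> * u))
     = peval (var_free_part j P) w"
proof -
  let ?c = "\<lambda>m. Poly_Mapping.lookup P m * monomial_eval m (w(j := 1))"
  have "peval P (w(j := u)) / (2 * pi * \<i> * u)
      = (\<Sum>m\<in>Poly_Mapping.keys P. ?c m * (u powi Poly_Mapping.lookup m j / (2 * pi * \<i> * u)))" for u
    unfolding peval_eq_sum sum_divide_distrib
    by (subst monomial_eval_fun_upd) (simp add: mult_ac)
  moreover have "((\<lambda>u. \<Sum>m\<in>Poly_Mapping.keys P. ?c m * (u powi Poly_Mapping.lookup m j / (2 * pi * \<i> * u)))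
      has_contour_integral (\<Sum>m\<in>Poly_Mapping.keys P. ?c m * (if Poly_Mapping.lookup m j = 0 then 1 else 0)))
      (circlepath 0 1)"
    by (intro has_contour_integral_sum has_contour_integral_lmul circlepath_integral_power_int) simp
  ultimately have "contour_integral (circlepath 0 1) (\<lambda>u. peval P (w(j := u)) / (2 * pi * \<i> * u))
      = (\<Sum>m\<in>Poly_Mapping.keys P. ?c m * (if Poly_Mapping.lookup m j = 0 then 1 else 0))"
    by (intro contour_integral_unique) simp
  also have "\<dots> = (\<Sum>m | m \<in> Poly_Mapping.keys P \<and> Poly_Mapping.lookup m j = 0.
                      Poly_Mapping.lookup P m * monomial_eval m w)"
  proof -
    have "monomial_eval m (w(j := 1)) = monomial_eval m w" if "Poly_Mapping.lookup m j = 0" for m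
      using that unfolding monomial_eval_def by (intro prod.cong) (auto simp: in_keys_iff)
    then show ?thesis
      unfolding sum.inter_filter[OF finite_keys] by (intro sum.cong) auto
  qed
  also have "\<dots> = peval (var_free_part j P) w"
    by (simp add: var_free_part_def peval_sum peval_single)
  finally show ?thesis .
qed

lemma torus_int_peval:
  "lvars_in n P \<Longrightarrow> torus_int n (peval P) = Poly_Mapping.lookup P 0"
proof (induction n arbitrary: P)
  case 0
  then have "Poly_Mapping.keys P \<subseteq> {0}"
    by (auto simp: lvars_in_def)
  then show ?case
    by (simp add: peval_superset[of "{0}"] monomial_eval_def)
next
  case (Suc n)
  have "torus_int (Suc n) (peval P) = torus_int n (peval (var_free_part n P))"
    by (simp only: torus_int.simps contour_integral_peval)
  also have "\<dots> = Poly_Mapping.lookup (var_free_part n P) 0"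
    by (rule Suc.IH[OF lvars_in_var_free_part[OF Suc.prems]])
  finally show ?case
    by (simp add: lookup_var_free_part)
qed

section \<open>The scalar product as a sum of constant terms\<close>

definition weight :: "nat \<Rightarrow> nat \<Rightarrow> lpoly" where
  "weight b n = (\<Prod>i<n. \<Prod>j\<in>{0..<n} - {i}. (1 - xpow i 1 * xpow j (- 1)) ^ b)"

lemma lvars_in_weight: "lvars_in n (weight b n)"
  unfolding weight_def
  by (intro lvars_in_prod lvars_in_power lvars_in_diff lvars_in_mult lvars_in_one lvars_in_xpow) auto

lemma peval_weight:
  assumes "\<forall>j. w j \<noteq> 0"
  shows "peval (weight b n) w = (\<Prod>i<n. \<Prod>j\<in>{0..<n} - {i}. (1 - w i / w j) ^ b)"
  unfolding weight_def using assms
  by (simp add: peval_prod peval_power peval_diff peval_mult power_int_minus divide_inverse)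

lemma ip'_eq_sum_constant_terms:
  assumes "tens_space N n f" "tens_space N n g"
  shows "ip' N b n f g
    = (1 / fact n) * (\<Sum>a\<in>idx_tuples N n. Poly_Mapping.lookup (weight b n * pstar (f a) * g a) 0)"
proof -
  have "torus_int n (\<lambda>w. (\<Prod>i<n. \<Prod>j\<in>{0..<n} - {i}. (1 - w i / w j) ^ b)
          * peval (conjc (f a)) (\<lambda>j. inverse (w j)) * peval (g a) w)
      = torus_int n (peval (weight b n * pstar (f a) * g a))" for a
    by (rule torus_int_cong) (simp add: peval_mult peval_weight peval_conjc_inverse)
  also have "\<dots> a = Poly_Mapping.lookup (weight b n * pstar (f a) * g a) 0" for a
    using assms
    by (intro torus_int_peval lvars_in_mult lvars_in_weight lvars_in_pstar) (auto simp: tens_space_def)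
  finally show ?thesis
    unfolding ip'_def by simp
qed

definition list_exponent :: "int list \<Rightarrow> (nat \<Rightarrow>\<^sub>0 int)" where
  "list_exponent e = (\<Sum>i<length e. Poly_Mapping.single i (e ! i))"

lemma lookup_list_exponent:
  "Poly_Mapping.lookup (list_exponent e) i = (if i < length e then e ! i else 0)"
  by (simp add: list_exponent_def lookup_sum lookup_single when_def)

definition omega0 :: "nat \<Rightarrow> nat \<Rightarrow> tens \<Rightarrow> lpoly" where
  "omega0 N n f = (\<Sum>a\<in>idx_tuples N n. lmono (list_exponent (map int a)) * subst_power (- int N) (f a))"

lemma finite_idx_tuples: "finite (idx_tuples N n)"
  using finite_lists_length_eq[of "{1..N}" n] by (simp add: idx_tuples_def conj_commute)

lemma Nabla_eq_subst_power_weight: "Nabla N b n = subst_power (- int N) (weight b n)"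
proof -
  have "subst_power (- int N) (weight b n)
      = (\<Prod>i<n. \<Prod>j\<in>{0..<n} - {i}. (1 - xpow i (- int N) * xpow j (int N)) ^ b)"
    by (simp add: weight_def subst_power_prod subst_power_power subst_power_diff subst_power_mult
        subst_power_xpow)
  also have "\<dots> = (\<Prod>i<n. \<Prod>j | j \<in> {..<n} \<and> i \<noteq> j. (1 - xpow j (int N) * xpow i (- int N)) ^ b)"
    by (intro prod.cong refl) (auto simp: mult.commute)
  also have "\<dots> = (\<Prod>j<n. \<Prod>i | i \<in> {..<n} \<and> i \<noteq> j. (1 - xpow j (int N) * xpow i (- int N)) ^ b)"
    by (rule prod.swap_restrict) auto
  also have "\<dots> = Nabla N b n"
    unfolding Nabla_def by (intro prod.cong refl) auto
  finally show ?thesis by simp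
qed

lemma lookup_subst_power_index_difference:
  assumes a: "a \<in> idx_tuples N n" and a': "a' \<in> idx_tuples N n" and "a \<noteq> a'"
  shows "Poly_Mapping.lookup (subst_power (- int N) p)
           (list_exponent (map int a) - list_exponent (map int a')) = 0"
proof -
  have len: "length a = n" "length a' = n" and sets: "set a \<subseteq> {1..N}" "set a' \<subseteq> {1..N}"
    using a a' by (auto simp: idx_tuples_def)
  then obtain i where i: "i < n" "a ! i \<noteq> a' ! i"
    using \<open>a \<noteq> a'\<close> by (auto simp: list_eq_iff_nth_eq)
  then have "a ! i \<in> set a" "a' ! i \<in> set a'"
    using len by simp_all
  then have "a ! i \<in> {1..N}" "a' ! i \<in> {1..N}"
    using sets by blast+
  then have "\<bar>int (a ! i) - int (a' ! i)\<bar> < int N"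
    by auto
  then have "\<not> int N dvd int (a ! i) - int (a' ! i)"
    using i(2) dvd_imp_le_int[of "int (a ! i) - int (a' ! i)" "int N"] by auto
  then show ?thesis
    using i len by (intro lookup_subst_power_not_dvd[where i = i]) (simp add: lookup_minus lookup_list_exponent)
qed

lemma constant_term_Nabla_omega0:
  assumes "N \<ge> 1"
  shows "Poly_Mapping.lookup (Nabla N b n * pstar (omega0 N n f) * omega0 N n g) 0
       = (\<Sum>a\<in>idx_tuples N n. Poly_Mapping.lookup (weight b n * pstar (f a) * g a) 0)"
proof -
  let ?I = "idx_tuples N n"
  let ?x = "\<lambda>a. list_exponent (map int a)"
  let ?\<sigma> = "subst_power (- int N)"
  let ?R = "\<lambda>a a'. weight b n * pstar (f a) * g a'"
  have "Nabla N b n * pstar (omega0 N n f) * omega0 N n g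
      = (\<Sum>a\<in>?I. \<Sum>a'\<in>?I. ?\<sigma> (weight b n) * (lmono (- ?x a) * ?\<sigma> (pstar (f a))) * (lmono (?x a') * ?\<sigma> (g a')))"
    by (simp add: Nabla_eq_subst_power_weight omega0_def pstar_sum pstar_mult pstar_lmono
        pstar_subst_power sum_distrib_left sum_distrib_right) (rule sum.swap)
  also have "\<dots> = (\<Sum>a\<in>?I. \<Sum>a'\<in>?I. lmono (?x a' - ?x a) * ?\<sigma> (?R a a'))"
  proof (intro sum.cong refl)
    fix a a'
    have "lmono (?x a' - ?x a) = lmono (- ?x a) * lmono (?x a')"
      by (simp add: lmono_mult)
    then show "?\<sigma> (weight b n) * (lmono (- ?x a) * ?\<sigma> (pstar (f a))) * (lmono (?x a') * ?\<sigma> (g a'))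
        = lmono (?x a' - ?x a) * ?\<sigma> (?R a a')"
      by (simp add: subst_power_mult mult_ac)
  qed
  finally have "Poly_Mapping.lookup (Nabla N b n * pstar (omega0 N n f) * omega0 N n g) 0
      = (\<Sum>a\<in>?I. \<Sum>a'\<in>?I. Poly_Mapping.lookup (?\<sigma> (?R a a')) (?x a - ?x a'))"
    by (simp add: lookup_sum lookup_lmono_mult)
  also have "\<dots> = (\<Sum>a\<in>?I. \<Sum>a'\<in>?I. if a' = a then Poly_Mapping.lookup (?\<sigma> (?R a a)) 0 else 0)"
    by (intro sum.cong refl) (auto simp: lookup_subst_power_index_difference)
  also have "\<dots> = (\<Sum>a\<in>?I. Poly_Mapping.lookup (?R a a) 0)"
    using assms by (simp add: finite_idx_tuples lookup_subst_power_zero)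
  finally show ?thesis .
qed

section \<open>Alternating functions on lists\<close>

lemma permute_list_transpose_eq_list_update:
  assumes "i < length xs" "j < length xs"
  shows "permute_list (Transposition.transpose i j) xs = xs[i := xs ! j, j := xs ! i]"
proof (rule nth_equalityI)
  fix l assume "l < length (permute_list (Transposition.transpose i j) xs)"
  moreover have "Transposition.transpose i j permutes {..<length xs}"
    using assms by (intro permutes_swap_id) auto
  ultimately show "permute_list (Transposition.transpose i j) xs ! l = xs[i := xs ! j, j := xs ! i] ! l"
    using assms by (simp add: permute_list_nth nth_list_update Transposition.transpose_def)
qed simp

lemma permute_list_transpose_involutory:
  assumes "i < length xs" "j < length xs"
  shows "permute_list (Transposition.transpose i j) (permute_list (Transposition.transpose i j) xs) = xs"
proof -
  have "Transposition.transpose i j permutes {..<length xs}"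
    using assms by (intro permutes_swap_id) auto
  then show ?thesis
    by (simp flip: permute_list_compose)
qed

lemma permute_list_sign_if_transpositions:
  fixes c :: "'a list \<Rightarrow> 'b::comm_ring_1"
  assumes transp: "\<And>i j e. i < n \<Longrightarrow> j < n \<Longrightarrow> i \<noteq> j \<Longrightarrow> length e = n
                     \<Longrightarrow> c (permute_list (Transposition.transpose i j) e) = - c e"
    and "w permutes {..<n}" "length e = n"
  shows "c (permute_list w e) = of_int (sign w) * c e"
  using assms(2) finite_lessThan assms(3)
proof (induction w arbitrary: e rule: permutes_induct)
  case id
  then show ?case by simp
next
  case (swap i j p)
  let ?t = "Transposition.transpose i j"
  have "c (permute_list (?t \<circ> p) e) = c (permute_list p (permute_list ?t e))"
    using swap by (simp add: permute_list_compose)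
  also have "\<dots> = of_int (sign p) * c (permute_list ?t e)"
    using swap by simp
  also have "\<dots> = - (of_int (sign p) * c e)"
    using swap by (simp add: transp)
  also have "\<dots> = of_int (sign (?t \<circ> p)) * c e"
    using swap permutation_permutes[of p]
    by (auto simp: sign_compose permutation_swap_id sign_swap_id)
  finally show ?case .
qed

lemma sum_sign_permute_list_eq:
  assumes "distinct k" "w0 permutes {..<length k}" "permute_list w0 k = e"
  shows "(\<Sum>w | w permutes {0..<length k}. of_int (sign w) * (if permute_list w k = e then 1 else 0))
       = (of_int (sign w0) :: 'b::comm_ring_1)"
proof -
  have "permute_list w k = e \<longleftrightarrow> w = w0" if "w permutes {..<length k}" for w
  proof
    assume "permute_list w k = e"
    then have "k ! w l = k ! w0 l" if "l < length k" for l
      using assms(3) that \<open>w permutes _\<close> assms(2) by (metis permute_list_nth)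
    moreover have "w l < length k \<and> w0 l < length k" if "l < length k" for l
      using that permutes_in_image[OF \<open>w permutes _\<close>, of l] permutes_in_image[OF assms(2), of l]
      by simp
    ultimately have "w l = w0 l" for l
      using assms(1) \<open>w permutes _\<close> assms(2)
      by (cases "l < length k") (auto simp: nth_eq_iff_index_eq permutes_not_in)
    then show "w = w0" ..
  qed (use assms in simp)
  then show ?thesis
    using assms(2) by (simp add: atLeast0LessThan if_distrib finite_permutations cong: if_cong)
qed

lemma sorted_wrt_greater_mset_unique:
  fixes xs ys :: "'a::linorder list"
  assumes "sorted_wrt (>) xs" "sorted_wrt (>) ys" "mset xs = mset ys"
  shows "xs = ys"
proof -
  have "sorted_wrt (<) (rev xs)" "sorted_wrt (<) (rev ys)"
    using assms(1,2) by (simp_all add: sorted_wrt_rev)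
  then have "sorted (rev xs)" "sorted (rev ys)"
    by (simp_all add: strict_sorted_iff)
  then have "sort (rev ys) = rev xs" "sort (rev ys) = rev ys"
    using assms(3) by (simp_all add: properties_for_sort)
  then show ?thesis
    by simp
qed

lemma sum_sign_permute_list_eq_zero:
  assumes "mset k \<noteq> mset e"
  shows "(\<Sum>w | w permutes {0..<length k}. of_int (sign w) * (if permute_list w k = e then 1 else 0))
       = (0 :: 'b::comm_ring_1)"
proof -
  have "permute_list w k \<noteq> e" if "w permutes {0..<length k}" for w
    using assms that mset_permute_list[of w k] by (auto simp: atLeast0LessThan)
  then show ?thesis
    by simp
qed

lemma sorted_wrt_greater_imp_distinct:
  assumes "sorted_wrt (>) (xs :: 'a::linorder list)"
  shows "distinct xs"
proof -
  have "sorted_wrt (<) (rev xs)"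
    using assms by (simp add: sorted_wrt_rev)
  then show ?thesis
    by (simp add: strict_sorted_iff)
qed

lemma sum_sign_permute_list_sorted:
  fixes k k0 :: "'a::linorder list"
  assumes "sorted_wrt (>) k" "sorted_wrt (>) k0" "length k = n" "length k0 = n"
    and "w0 permutes {..<n}" "permute_list w0 k0 = e"
  shows "(\<Sum>w | w permutes {0..<n}. of_int (sign w) * (if permute_list w k = e then 1 else 0))
       = (if k = k0 then of_int (sign w0) else (0 :: 'b::comm_ring_1))"
proof (cases "k = k0")
  case True
  then show ?thesis
    using sum_sign_permute_list_eq[OF sorted_wrt_greater_imp_distinct[OF assms(2)], of w0 e] assms(4-6)
    by simp
next
  case False
  have "mset k0 = mset e"
    using assms(4-6) mset_permute_list[of w0 k0] by simp
  then have "mset k \<noteq> mset e"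
    using False assms(1,2) sorted_wrt_greater_mset_unique by metis
  then show ?thesis
    using False assms(3) sum_sign_permute_list_eq_zero[where 'b = 'b, of k e] by simp
qed

lemma alternating_eq_zero_if_not_distinct:
  fixes c :: "'a list \<Rightarrow> 'b::{idom, ring_char_0}"
  assumes alt: "\<And>w e. w permutes {..<n} \<Longrightarrow> length e = n \<Longrightarrow> c (permute_list w e) = of_int (sign w) * c e"
    and e: "length e = n" "\<not> distinct e"
  shows "c e = 0"
proof -
  obtain i j where ij: "i < n" "j < n" "i \<noteq> j" "e ! i = e ! j"
    using e by (auto simp: distinct_conv_nth)
  then have "e[i := e ! j, j := e ! i] = e"
    by (metis list_update_id)
  then have "permute_list (Transposition.transpose i j) e = e"
    using ij e by (simp add: permute_list_transpose_eq_list_update)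
  then have "c e = - c e"
    using alt[of "Transposition.transpose i j" e] ij e by (simp add: permutes_swap_id sign_swap_id)
  then have "2 * c e = 0"
    by (metis mult_2 right_minus)
  then show ?thesis
    by simp
qed

lemma alternating_expansion:
  fixes c :: "'a::linorder list \<Rightarrow> 'b::{idom, ring_char_0}" and n :: nat
  defines "K \<equiv> {k. length k = n \<and> sorted_wrt (>) k \<and> c k \<noteq> 0}"
  assumes alt: "\<And>w e. w permutes {..<n} \<Longrightarrow> length e = n \<Longrightarrow> c (permute_list w e) = of_int (sign w) * c e"
    and fin: "finite K" and e: "length e = n"
  shows "c e = (\<Sum>k\<in>K. c k * (\<Sum>w | w permutes {0..<n}.
                                  of_int (sign w) * (if permute_list w k = e then 1 else 0)))"
proof (cases "distinct e")
  case True
  define k0 where "k0 = rev (sort e)"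
  have k0: "length k0 = n" "sorted_wrt (>) k0" "mset k0 = mset e"
    using True e by (simp_all add: k0_def sorted_wrt_rev strict_sorted_iff)
  then obtain w0 where w0: "w0 permutes {..<n}" "permute_list w0 k0 = e"
    using mset_eq_permutation by metis
  have "(\<Sum>k\<in>K. c k * (\<Sum>w | w permutes {0..<n}.
                 of_int (sign w) * (if permute_list w k = e then 1 else 0)))
      = (\<Sum>k\<in>K. if k = k0 then c k0 * of_int (sign w0) else 0)"
    using k0 w0 by (intro sum.cong refl) (simp add: K_def sum_sign_permute_list_sorted)
  also have "\<dots> = c e"
    using fin k0 w0 alt[of w0 k0] by (auto simp: K_def)
  finally show ?thesis ..
next
  case False
  have "mset k \<noteq> mset e" if "k \<in> K" for k
    using that False sorted_wrt_greater_imp_distinct mset_eq_imp_distinct_iff by (fastforce simp: K_def)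
  then have "(\<Sum>w | w permutes {0..<n}. of_int (sign w) * (if permute_list w k = e then 1 else 0)) = (0 :: 'b)"
    if "k \<in> K" for k
    using that sum_sign_permute_list_eq_zero[where 'b = 'b] by (auto simp: K_def)
  then show ?thesis
    using alternating_eq_zero_if_not_distinct[OF alt e False] by simp
qed

section \<open>Indices of the tensor basis\<close>

lemma ul_bounds: "N \<ge> 1 \<Longrightarrow> 1 \<le> ul N x \<and> ul N x \<le> int N"
  by (simp add: ul_def pos_mod_bound add1_zle_eq)

lemma ul_minus_ol:
  assumes "N \<ge> 1"
  shows "ul N x - int N * ol N x = x"
proof -
  have "ul N x - x = int N * - ((x - 1) div int N)"
    unfolding ul_def using div_mult_mod_eq[of "x - 1" "int N"] by (simp add: algebra_simps)
  then show ?thesis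
    using assms by (simp add: ol_def)
qed

lemma ul_ol_unique:
  assumes "N \<ge> 1" "1 \<le> u" "u \<le> int N"
  shows "ul N (u - int N * v) = u" "ol N (u - int N * v) = v"
proof -
  have "u - int N * v - 1 = (u - 1) + (- v) * int N"
    by (simp add: algebra_simps)
  then have "(u - int N * v - 1) mod int N = (u - 1) mod int N"
    by (simp only: mod_mult_self1)
  also have "\<dots> = u - 1"
    using assms by (intro mod_pos_pos_trivial) auto
  finally show u: "ul N (u - int N * v) = u"
    by (simp add: ul_def)
  show "ol N (u - int N * v) = v"
    unfolding ol_def u using assms by simp
qed

definition index_tuple :: "nat \<Rightarrow> int list \<Rightarrow> nat list" where
  "index_tuple N e = map (\<lambda>x. nat (ul N x)) e"

lemma length_index_tuple [simp]: "length (index_tuple N e) = length e"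
  by (simp add: index_tuple_def)

definition z_exponent :: "nat \<Rightarrow> int list \<Rightarrow> (nat \<Rightarrow>\<^sub>0 int)" where
  "z_exponent N e = list_exponent (map (ol N) e)"

text \<open>The tensor monomial \<open>z\<^sup>m \<otimes> v\<^sub>a\<close> is the one indexed by \<open>k\<close> with
  \<open>k\<^sub>i = a\<^sub>i - N m\<^sub>i\<close>; \<open>index_tuple\<close> and \<open>z_exponent\<close> recover \<open>a\<close> and \<open>m\<close> from \<open>k\<close>.\<close>
definition combined_exponent :: "nat \<Rightarrow> nat \<Rightarrow> nat list \<Rightarrow> (nat \<Rightarrow>\<^sub>0 int) \<Rightarrow> int list" where
  "combined_exponent N n a m = map (\<lambda>i. int (a ! i) - int N * Poly_Mapping.lookup m i) [0..<n]"

lemma index_tuple_mem_idx_tuples: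
  assumes "N \<ge> 1" "length e = n"
  shows "index_tuple N e \<in> idx_tuples N n"
proof -
  have "1 \<le> nat (ul N x) \<and> nat (ul N x) \<le> N" for x
    using ul_bounds[OF assms(1), of x] by linarith
  then show ?thesis
    using assms(2) by (auto simp: index_tuple_def idx_tuples_def)
qed

lemma keys_z_exponent: "Poly_Mapping.keys (z_exponent N e) \<subseteq> {0..<length e}"
  by (auto simp: in_keys_iff z_exponent_def lookup_list_exponent split: if_splits)

lemma combined_exponent_index_tuple_z_exponent:
  assumes N: "N \<ge> 1" and e: "length e = n"
  shows "combined_exponent N n (index_tuple N e) (z_exponent N e) = e"
proof (rule nth_equalityI)
  fix i assume "i < length (combined_exponent N n (index_tuple N e) (z_exponent N e))"
  then have i: "i < length e"
    using e by (simp add: combined_exponent_def)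
  have "int (nat (ul N (e ! i))) = ul N (e ! i)"
    using ul_bounds[OF N, of "e ! i"] by simp
  then show "combined_exponent N n (index_tuple N e) (z_exponent N e) ! i = e ! i"
    using i e ul_minus_ol[OF N, of "e ! i"]
    by (simp add: combined_exponent_def index_tuple_def z_exponent_def lookup_list_exponent)
qed (simp add: combined_exponent_def e)

lemma index_tuple_z_exponent_inj:
  assumes "N \<ge> 1" "length e = n" "length e' = n"
    and "index_tuple N e = index_tuple N e'" "z_exponent N e = z_exponent N e'"
  shows "e = e'"
  by (metis assms combined_exponent_index_tuple_z_exponent)

lemma index_tuple_z_exponent_combined_exponent:
  assumes N: "N \<ge> 1" and a: "a \<in> idx_tuples N n" and m: "Poly_Mapping.keys m \<subseteq> {0..<n}"
  shows "index_tuple N (combined_exponent N n a m) = a" "z_exponent N (combined_exponent N n a m) = m"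
proof -
  have len: "length a = n"
    using a by (simp add: idx_tuples_def)
  have bounds: "1 \<le> int (a ! i) \<and> int (a ! i) \<le> int N" if "i < n" for i
  proof -
    have "a ! i \<in> set a"
      using that len by simp
    then have "a ! i \<in> {1..N}"
      using a by (auto simp: idx_tuples_def)
    then show ?thesis
      by simp
  qed
  show "index_tuple N (combined_exponent N n a m) = a"
    using len bounds ul_ol_unique(1)[OF N]
    by (intro nth_equalityI) (auto simp: index_tuple_def combined_exponent_def)
  show "z_exponent N (combined_exponent N n a m) = m"
  proof (rule poly_mapping_eqI)
    fix i
    show "Poly_Mapping.lookup (z_exponent N (combined_exponent N n a m)) i = Poly_Mapping.lookup m i"
      using bounds[of i] ul_ol_unique(2)[OF N] m
      by (cases "i < n") (auto simp: z_exponent_def combined_exponent_def lookup_list_exponent in_keys_iff)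
  qed
qed

lemma index_tuple_permute_list:
  "w permutes {..<length e} \<Longrightarrow> index_tuple N (permute_list w e) = permute_list w (index_tuple N e)"
  by (simp add: index_tuple_def permute_list_map)

lemma z_exponent_permute_list:
  assumes "w permutes {..<length e}"
  shows "z_exponent N (permute_list w e) = Poly_Mapping.map_key w (z_exponent N e)"
proof (rule poly_mapping_eqI)
  fix i
  have "w i < length e \<longleftrightarrow> i < length e"
    using permutes_in_image[OF assms] by simp
  then show "Poly_Mapping.lookup (z_exponent N (permute_list w e)) i
      = Poly_Mapping.lookup (Poly_Mapping.map_key w (z_exponent N e)) i"
    using assms by (simp add: z_exponent_def lookup_list_exponent lookup_map_key permutes_inj permute_list_nth)
qed

lemma list_exponent_index_tuple_z_exponent:
  assumes N: "N \<ge> 1"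
  shows "list_exponent (map int (index_tuple N e)) - of_nat N * z_exponent N e = list_exponent e"
proof (rule poly_mapping_eqI)
  fix i
  have "int (nat (ul N (e ! i))) - int N * ol N (e ! i) = e ! i"
    using ul_bounds[OF N, of "e ! i"] ul_minus_ol[OF N, of "e ! i"] by simp
  moreover have "Poly_Mapping.lookup (of_nat N * z_exponent N e) i = int N * Poly_Mapping.lookup (z_exponent N e) i"
    using lookup_of_int_mult[of "int N" "z_exponent N e" i] by simp
  ultimately show "Poly_Mapping.lookup (list_exponent (map int (index_tuple N e)) - of_nat N * z_exponent N e) i
      = Poly_Mapping.lookup (list_exponent e) i"
    by (simp add: lookup_minus z_exponent_def index_tuple_def lookup_list_exponent)
qed

definition tens_coeff :: "nat \<Rightarrow> tens \<Rightarrow> int list \<Rightarrow> complex" where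
  "tens_coeff N f e = Poly_Mapping.lookup (f (index_tuple N e)) (z_exponent N e)"

lemma lookup_eq_tens_coeff:
  "N \<ge> 1 \<Longrightarrow> a \<in> idx_tuples N n \<Longrightarrow> Poly_Mapping.keys m \<subseteq> {0..<n}
    \<Longrightarrow> Poly_Mapping.lookup (f a) m = tens_coeff N f (combined_exponent N n a m)"
  by (simp add: tens_coeff_def index_tuple_z_exponent_combined_exponent)

lemma lookup_eq_zero_if_tens_space:
  assumes "tens_space N n f" "\<not> (a \<in> idx_tuples N n \<and> Poly_Mapping.keys m \<subseteq> {0..<n})"
  shows "Poly_Mapping.lookup (f a) m = 0"
proof (cases "a \<in> idx_tuples N n")
  case True
  then have "\<not> Poly_Mapping.keys m \<subseteq> {0..<n}"
    using assms(2) by simp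
  moreover have "lvars_in n (f a)"
    using assms(1) by (simp add: tens_space_def)
  ultimately have "m \<notin> Poly_Mapping.keys (f a)"
    by (auto simp: lvars_in_def)
  then show ?thesis
    by (simp add: in_keys_iff)
qed (use assms(1) in \<open>simp add: tens_space_def\<close>)

section \<open>The elements \<open>uhat N n k\<close> span \<open>F_space N n\<close>\<close>

lemma uhat_eq:
  assumes "length k = n"
  shows "uhat N n k a = (\<Sum>w | w permutes {0..<n}. of_int (sign w) *
     (if a = index_tuple N (permute_list w k) then lmono (z_exponent N (permute_list w k)) else 0))"
  unfolding uhat_def
proof (intro sum.cong refl)
  fix w
  have "map (\<lambda>i. nat (ul N (k ! w i))) [0..<n] = index_tuple N (permute_list w k)"
    using assms by (simp add: index_tuple_def permute_list_def)
  moreover have "(\<Sum>i<n. Poly_Mapping.single i (ol N (k ! w i))) = z_exponent N (permute_list w k)"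
    using assms by (auto simp: z_exponent_def list_exponent_def permute_list_def intro!: sum.cong)
  ultimately show "of_int (sign w) * (if a = map (\<lambda>i. nat (ul N (k ! w i))) [0..<n]
        then lmono (\<Sum>i<n. Poly_Mapping.single i (ol N (k ! w i))) else 0)
      = of_int (sign w) * (if a = index_tuple N (permute_list w k)
        then lmono (z_exponent N (permute_list w k)) else 0)"
    by simp
qed

lemma tens_space_uhat:
  assumes "N \<ge> 1" "length k = n"
  shows "tens_space N n (uhat N n k)"
  unfolding tens_space_def
proof (intro conjI allI impI)
  fix a assume "a \<notin> idx_tuples N n"
  moreover have "index_tuple N (permute_list w k) \<in> idx_tuples N n" for w
    using assms by (intro index_tuple_mem_idx_tuples) simp_all
  ultimately show "uhat N n k a = 0"
    by (auto simp: uhat_eq[OF assms(2)] intro!: sum.neutral)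
next
  fix a
  have "lvars_in n (lmono (z_exponent N (permute_list w k)))" for w
    using keys_z_exponent[of N "permute_list w k"] assms(2) by (intro lvars_in_lmono) simp
  then have "lvars_in n (if c then lmono (z_exponent N (permute_list w k)) else 0)" for c w
    by (cases c) (simp_all add: lvars_in_def)
  then show "lvars_in n (uhat N n k a)"
    unfolding uhat_eq[OF assms(2)] of_int_eq_lconst by (intro lvars_in_sum lvars_in_mult lvars_in_lconst)
qed

lemma tens_coeff_uhat:
  assumes "N \<ge> 1" "length k = n" "length e = n"
  shows "tens_coeff N (uhat N n k) e
       = (\<Sum>w | w permutes {0..<n}. of_int (sign w) * (if permute_list w k = e then 1 else 0))"
proof -
  have lookup_if: "Poly_Mapping.lookup (if c then lmono m' else 0) m = (if c \<and> m = m' then 1 else 0)"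
    for c m m'
    by (simp add: lmono_def lookup_single when_def)
  have "index_tuple N e = index_tuple N (permute_list w k) \<and> z_exponent N e = z_exponent N (permute_list w k)
      \<longleftrightarrow> permute_list w k = e" for w
    using index_tuple_z_exponent_inj[OF assms(1,3), of "permute_list w k"] assms(2) by auto
  then show ?thesis
    unfolding tens_coeff_def uhat_eq[OF assms(2)] lookup_sum of_int_eq_lconst lookup_lconst_mult lookup_if
    by simp
qed

lemma lookup_uhat:
  assumes "N \<ge> 1" "length k = n" "a \<in> idx_tuples N n" "Poly_Mapping.keys m \<subseteq> {0..<n}"
  shows "Poly_Mapping.lookup (uhat N n k a) m = (\<Sum>w | w permutes {0..<n}.
           of_int (sign w) * (if permute_list w k = combined_exponent N n a m then 1 else 0))"
  using assms by (simp add: lookup_eq_tens_coeff tens_coeff_uhat combined_exponent_def)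

lemma map_key_transpose_involutory:
  "Poly_Mapping.map_key (Transposition.transpose i j) (Poly_Mapping.map_key (Transposition.transpose i j) m) = m"
  by (rule poly_mapping_eqI) (simp add: lookup_map_key inj_transpose)

lemma inj_map_key_transpose: "inj (Poly_Mapping.map_key (Transposition.transpose i j))"
  by (metis injI map_key_transpose_involutory)

lemma Kop_eq_neg_Pop_iff:
  "Kop i j f = - Pop i j f \<longleftrightarrow>
     (\<forall>a m. Poly_Mapping.lookup (f a) (Poly_Mapping.map_key (Transposition.transpose i j) m)
              = - Poly_Mapping.lookup (f (a[i := a ! j, j := a ! i])) m)"
  by (simp add: Kop_def Pop_def fun_eq_iff poly_mapping_eq_iff lookup_map_key inj_map_key_transpose)

lemma keys_map_key_transpose_subset_iff:
  fixes m :: "nat \<Rightarrow>\<^sub>0 'a::zero"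
  assumes "i < n" "j < n"
  shows "Poly_Mapping.keys (Poly_Mapping.map_key (Transposition.transpose i j) m) \<subseteq> {0..<n}
     \<longleftrightarrow> Poly_Mapping.keys m \<subseteq> {0..<n}"
proof -
  have lt: "Transposition.transpose i j x < n \<longleftrightarrow> x < n" for x
    using assms by (auto simp: Transposition.transpose_def)
  have "(\<forall>x. Transposition.transpose i j x \<in> Poly_Mapping.keys m \<longrightarrow> x < n)
      \<longleftrightarrow> (\<forall>x\<in>Poly_Mapping.keys m. x < n)"
    by (metis lt transpose_involutory)
  then show ?thesis
    by (auto simp: keys_map_key inj_transpose)
qed

lemma list_swap_mem_idx_tuples_iff:
  assumes "i < n" "j < n"
  shows "a[i := a ! j, j := a ! i] \<in> idx_tuples N n \<longleftrightarrow> a \<in> idx_tuples N n"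
proof (cases "length a = n")
  case True
  then have "a[i := a ! j, j := a ! i] = permute_list (Transposition.transpose i j) a"
    using assms by (simp add: permute_list_transpose_eq_list_update)
  moreover have "Transposition.transpose i j permutes {..<length a}"
    using assms True by (intro permutes_swap_id) auto
  ultimately show ?thesis
    by (simp add: idx_tuples_def)
qed (simp add: idx_tuples_def)

lemma tens_coeff_transpose_if_Kop_eq_neg_Pop:
  assumes "Kop i j f = - Pop i j f" "i < n" "j < n" "length e = n"
  shows "tens_coeff N f (permute_list (Transposition.transpose i j) e) = - tens_coeff N f e"
proof -
  let ?t = "Transposition.transpose i j"
  let ?a = "index_tuple N (permute_list ?t e)"
  have t: "?t permutes {..<length e}"
    using assms by (intro permutes_swap_id) auto
  have "?a[i := ?a ! j, j := ?a ! i] = permute_list ?t ?a"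
    using assms by (simp add: permute_list_transpose_eq_list_update index_tuple_def)
  also have "\<dots> = index_tuple N e"
    using t assms by (simp add: index_tuple_permute_list permute_list_transpose_involutory)
  finally show ?thesis
    using assms(1)[unfolded Kop_eq_neg_Pop_iff, rule_format, of ?a "z_exponent N e"]
    by (simp add: tens_coeff_def z_exponent_permute_list[OF t])
qed

lemma Kop_eq_neg_Pop_if_tens_coeff_transpose:
  assumes N: "N \<ge> 1" and f: "tens_space N n f" and ij: "i < n" "j < n"
    and alt: "\<And>e. length e = n
                \<Longrightarrow> tens_coeff N f (permute_list (Transposition.transpose i j) e) = - tens_coeff N f e"
  shows "Kop i j f = - Pop i j f"
  unfolding Kop_eq_neg_Pop_iff
proof (intro allI)
  fix a and m :: "nat \<Rightarrow>\<^sub>0 int"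
  let ?t = "Transposition.transpose i j"
  show "Poly_Mapping.lookup (f a) (Poly_Mapping.map_key ?t m) = - Poly_Mapping.lookup (f (a[i := a ! j, j := a ! i])) m"
  proof (cases "a \<in> idx_tuples N n \<and> Poly_Mapping.keys (Poly_Mapping.map_key ?t m) \<subseteq> {0..<n}")
    case True
    define e where "e = combined_exponent N n a (Poly_Mapping.map_key ?t m)"
    have e: "length e = n" "index_tuple N e = a" "z_exponent N e = Poly_Mapping.map_key ?t m"
      using True N index_tuple_z_exponent_combined_exponent by (auto simp: e_def combined_exponent_def)
    have t: "?t permutes {..<length e}"
      using ij e(1) by (intro permutes_swap_id) auto
    have "length a = n"
      using True by (simp add: idx_tuples_def)
    then have "index_tuple N (permute_list ?t e) = a[i := a ! j, j := a ! i]"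
      using e(2) ij by (simp add: index_tuple_permute_list[OF t] permute_list_transpose_eq_list_update)
    moreover have "z_exponent N (permute_list ?t e) = m"
      using e by (simp add: z_exponent_permute_list[OF t] map_key_transpose_involutory)
    ultimately show ?thesis
      using alt[OF e(1)] e(2,3) by (simp add: tens_coeff_def)
  next
    case False
    then have "\<not> (a[i := a ! j, j := a ! i] \<in> idx_tuples N n \<and> Poly_Mapping.keys m \<subseteq> {0..<n})"
      using ij by (simp add: list_swap_mem_idx_tuples_iff keys_map_key_transpose_subset_iff)
    then show ?thesis
      using False f by (simp add: lookup_eq_zero_if_tens_space)
  qed
qed

lemma F_space_iff_tens_coeff:
  assumes "N \<ge> 1"
  shows "F_space N n f \<longleftrightarrow> tens_space N n f \<and>
    (\<forall>i<n. \<forall>j<n. i \<noteq> j \<longrightarrow> (\<forall>e. length e = n \<longrightarrow>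
       tens_coeff N f (permute_list (Transposition.transpose i j) e) = - tens_coeff N f e))"
  using assms
  by (auto simp: F_space_def tens_coeff_transpose_if_Kop_eq_neg_Pop intro: Kop_eq_neg_Pop_if_tens_coeff_transpose)

lemma tens_coeff_permute_list:
  assumes "N \<ge> 1" "F_space N n f" "w permutes {..<n}" "length e = n"
  shows "tens_coeff N f (permute_list w e) = of_int (sign w) * tens_coeff N f e"
  using assms by (intro permute_list_sign_if_transpositions[where n = n]) (auto simp: F_space_iff_tens_coeff)

lemma F_space_uhat:
  assumes N: "N \<ge> 1" and k: "length k = n"
  shows "F_space N n (uhat N n k)"
  unfolding F_space_iff_tens_coeff[OF N]
proof (intro conjI allI impI tens_space_uhat[OF N k])
  fix i j and e :: "int list"
  assume ij: "i < n" "j < n" "i \<noteq> j" and e: "length e = n"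
  let ?t = "Transposition.transpose i j"
  let ?P = "{w. w permutes {0..<n}}"
  have t: "?t permutes {0..<n}"
    using ij by (intro permutes_swap_id) auto
  have "permute_list (w \<circ> ?t) k = permute_list ?t e \<longleftrightarrow> permute_list w k = e" for w
    using t k e ij
    by (metis atLeast0LessThan permute_list_compose permute_list_transpose_involutory length_permute_list)
  moreover have "sign (w \<circ> ?t) = - sign w" if "w \<in> ?P" for w
  proof -
    have "permutation w"
      using that finite_atLeastLessThan permutation_permutes by blast
    then show ?thesis
      using ij by (simp add: sign_compose permutation_swap_id sign_swap_id)
  qed
  ultimately have sum_eq: "(\<Sum>w\<in>?P. of_int (sign (w \<circ> ?t)) *
        (if permute_list (w \<circ> ?t) k = permute_list ?t e then 1 else 0))
      = (\<Sum>w\<in>?P. - (of_int (sign w) * (if permute_list w k = e then 1 else 0 :: complex)))"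
    by (intro sum.cong) simp_all
  have "tens_coeff N (uhat N n k) (permute_list ?t e)
      = (\<Sum>w\<in>?P. of_int (sign w) * (if permute_list w k = permute_list ?t e then 1 else 0))"
    using e k by (simp add: tens_coeff_uhat[OF N])
  also have "\<dots> = (\<Sum>w\<in>?P. of_int (sign (w \<circ> ?t)) *
        (if permute_list (w \<circ> ?t) k = permute_list ?t e then 1 else 0))"
    by (rule sum_permutations_compose_right[OF t])
  also have "\<dots> = - tens_coeff N (uhat N n k) e"
    unfolding sum_eq using e k by (simp add: tens_coeff_uhat[OF N] sum_negf)
  finally show "tens_coeff N (uhat N n k) (permute_list ?t e) = - tens_coeff N (uhat N n k) e" .
qed

definition uhat_support :: "nat \<Rightarrow> nat \<Rightarrow> tens \<Rightarrow> int list set" where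
  "uhat_support N n f = {k. length k = n \<and> sorted_wrt (>) k \<and> tens_coeff N f k \<noteq> 0}"

lemma finite_uhat_support:
  assumes N: "N \<ge> 1"
  shows "finite (uhat_support N n f)"
proof -
  have "uhat_support N n f
      \<subseteq> (\<lambda>(a, m). combined_exponent N n a m) ` (SIGMA a:idx_tuples N n. Poly_Mapping.keys (f a))"
  proof
    fix k assume k: "k \<in> uhat_support N n f"
    then have "length k = n" "z_exponent N k \<in> Poly_Mapping.keys (f (index_tuple N k))"
      by (auto simp: uhat_support_def tens_coeff_def in_keys_iff)
    moreover have "index_tuple N k \<in> idx_tuples N n"
      using N \<open>length k = n\<close> by (rule index_tuple_mem_idx_tuples)
    ultimately show "k \<in> (\<lambda>(a, m). combined_exponent N n a m) ` (SIGMA a:idx_tuples N n. Poly_Mapping.keys (f a))"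
      using combined_exponent_index_tuple_z_exponent[OF N \<open>length k = n\<close>] by force
  qed
  then show ?thesis
    by (rule finite_subset) (simp add: finite_idx_tuples)
qed

lemma F_space_eq_sum_uhat:
  assumes N: "N \<ge> 1" and f: "F_space N n f"
  shows "f a = (\<Sum>k\<in>uhat_support N n f. lconst (tens_coeff N f k) * uhat N n k a)"
proof (rule poly_mapping_eqI)
  fix m
  let ?K = "uhat_support N n f"
  have K: "length k = n" if "k \<in> ?K" for k
    using that by (simp add: uhat_support_def)
  have rhs: "Poly_Mapping.lookup (\<Sum>k\<in>?K. lconst (tens_coeff N f k) * uhat N n k a) m
      = (\<Sum>k\<in>?K. tens_coeff N f k * Poly_Mapping.lookup (uhat N n k a) m)"
    by (simp add: lookup_sum lookup_lconst_mult)
  show "Poly_Mapping.lookup (f a) m = Poly_Mapping.lookup (\<Sum>k\<in>?K. lconst (tens_coeff N f k) * uhat N n k a) m"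
  proof (cases "a \<in> idx_tuples N n \<and> Poly_Mapping.keys m \<subseteq> {0..<n}")
    case True
    let ?e = "combined_exponent N n a m"
    have e: "length ?e = n"
      by (simp add: combined_exponent_def)
    have "Poly_Mapping.lookup (f a) m = tens_coeff N f ?e"
      using True N by (simp add: lookup_eq_tens_coeff)
    also have "\<dots> = (\<Sum>k\<in>?K. tens_coeff N f k * (\<Sum>w | w permutes {0..<n}.
                        of_int (sign w) * (if permute_list w k = ?e then 1 else 0)))"
      unfolding uhat_support_def
      by (rule alternating_expansion)
         (use N f e finite_uhat_support[OF N, of n f] in \<open>simp_all add: uhat_support_def tens_coeff_permute_list\<close>)
    also have "\<dots> = (\<Sum>k\<in>?K. tens_coeff N f k * Poly_Mapping.lookup (uhat N n k a) m)"
      using True N K e by (intro sum.cong refl) (simp add: lookup_uhat)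
    finally show ?thesis
      unfolding rhs .
  next
    case False
    have "Poly_Mapping.lookup (uhat N n k a) m = 0" if "k \<in> ?K" for k
      by (rule lookup_eq_zero_if_tens_space[OF tens_space_uhat[OF N K[OF that]] False])
    moreover have "Poly_Mapping.lookup (f a) m = 0"
      using False f by (intro lookup_eq_zero_if_tens_space) (simp_all add: F_space_def)
    ultimately show ?thesis
      unfolding rhs by simp
  qed
qed

section \<open>Identification of \<open>omega\<close>\<close>

lemma F_space_add: "F_space N n f \<Longrightarrow> F_space N n g \<Longrightarrow> F_space N n (\<lambda>a. f a + g a)"
  by (auto simp: F_space_def Kop_eq_neg_Pop_iff tens_space_def lookup_add lvars_in_add)

lemma F_space_smult: "F_space N n f \<Longrightarrow> F_space N n (\<lambda>a. lconst c * f a)"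
  by (auto simp: F_space_def Kop_eq_neg_Pop_iff tens_space_def lookup_lconst_mult lvars_in_mult lvars_in_lconst)

lemma F_space_zero: "F_space N n (\<lambda>a. 0)"
  by (auto simp: F_space_def Kop_eq_neg_Pop_iff tens_space_def lvars_in_def)

lemma F_space_sum:
  "(\<And>k. k \<in> K \<Longrightarrow> F_space N n (h k)) \<Longrightarrow> F_space N n (\<lambda>a. \<Sum>k\<in>K. lconst (c k) * h k a)"
  by (induction K rule: infinite_finite_induct) (auto simp: F_space_zero F_space_add F_space_smult)

lemma F_space_linear_sum:
  fixes \<Phi> :: "tens \<Rightarrow> lpoly"
  assumes add: "\<And>f g. F_space N n f \<Longrightarrow> F_space N n g \<Longrightarrow> \<Phi> (\<lambda>a. f a + g a) = \<Phi> f + \<Phi> g"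
    and smult: "\<And>c f. F_space N n f \<Longrightarrow> \<Phi> (\<lambda>a. lconst c * f a) = lconst c * \<Phi> f"
    and h: "\<And>k. k \<in> K \<Longrightarrow> F_space N n (h k)"
  shows "\<Phi> (\<lambda>a. \<Sum>k\<in>K. lconst (c k) * h k a) = (\<Sum>k\<in>K. lconst (c k) * \<Phi> (h k))"
  using h
proof (induction K rule: infinite_finite_induct)
  case (insert k K)
  have "F_space N n (\<lambda>a. lconst (c k) * h k a)" "F_space N n (\<lambda>a. \<Sum>k\<in>K. lconst (c k) * h k a)"
    using insert by (simp_all add: F_space_smult F_space_sum)
  then show ?case
    using insert by (simp add: add smult)
qed (use smult[OF F_space_zero, of 0] in \<open>simp_all add: lconst_def\<close>)

lemma omega0_add: "omega0 N n (\<lambda>a. f a + g a) = omega0 N n f + omega0 N n g"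
  by (simp add: omega0_def subst_power_add distrib_left sum.distrib)

lemma omega0_smult: "omega0 N n (\<lambda>a. lconst c * f a) = lconst c * omega0 N n f"
  by (simp add: omega0_def subst_power_mult sum_distrib_left mult_ac)

lemma ahat_eq:
  assumes "length k = n"
  shows "ahat n k = (\<Sum>w | w permutes {0..<n}. of_int (sign w) * lmono (list_exponent (permute_list w k)))"
proof -
  let ?P = "{w. w permutes {0..<n}}"
  have "ahat n k = (\<Sum>w\<in>?P. of_int (sign w) * lmono (\<Sum>i<n. Poly_Mapping.single (w i) (k ! i)))"
    by (simp add: ahat_def prod_xpow)
  also have "\<dots> = (\<Sum>w\<in>?P. of_int (sign (inv w)) * lmono (\<Sum>i<n. Poly_Mapping.single (inv w i) (k ! i)))"
    by (rule sum_permutations_inverse)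
  also have "\<dots> = (\<Sum>w\<in>?P. of_int (sign w) * lmono (list_exponent (permute_list w k)))"
  proof (rule sum.cong[OF refl])
    fix w assume "w \<in> ?P"
    then have w: "w permutes {..<n}"
      by (simp add: atLeast0LessThan)
    then have "sign (inv w) = sign w"
      by (metis finite_lessThan permutation_permutes sign_inverse)
    moreover have "(\<Sum>i<n. Poly_Mapping.single (inv w i) (k ! i)) = (\<Sum>j<n. Poly_Mapping.single j (k ! w j))"
      using sum.reindex_bij_betw[OF permutes_imp_bij[OF w], of "\<lambda>i. Poly_Mapping.single (inv w i) (k ! i)"]
      by (simp add: permutes_inverses(2)[OF w])
    moreover have "list_exponent (permute_list w k) = (\<Sum>j<n. Poly_Mapping.single j (k ! w j))"
      using assms by (simp add: list_exponent_def permute_list_def)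
    ultimately show "of_int (sign (inv w)) * lmono (\<Sum>i<n. Poly_Mapping.single (inv w i) (k ! i))
        = of_int (sign w) * lmono (list_exponent (permute_list w k))"
      by simp
  qed
  finally show ?thesis .
qed

lemma omega0_uhat:
  assumes N: "N \<ge> 1" and k: "length k = n"
  shows "omega0 N n (uhat N n k) = ahat n k"
proof -
  let ?P = "{w. w permutes {0..<n}}"
  let ?I = "idx_tuples N n"
  let ?a = "\<lambda>w. index_tuple N (permute_list w k)"
  let ?x = "\<lambda>a w. list_exponent (map int a) + of_int (- int N) * z_exponent N (permute_list w k)"
  have "omega0 N n (uhat N n k) = (\<Sum>a\<in>?I. \<Sum>w\<in>?P. of_int (sign w) * (if a = ?a w then lmono (?x a w) else 0))"
    unfolding omega0_def uhat_eq[OF k]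
    by (simp add: subst_power_sum subst_power_mult of_int_eq_lconst subst_power_lmono
        sum_distrib_left mult_ac lmono_mult if_distrib cong: if_cong)
  also have "\<dots> = (\<Sum>w\<in>?P. \<Sum>a\<in>?I. if a = ?a w then of_int (sign w) * lmono (?x (?a w) w) else 0)"
    by (subst sum.swap) (simp add: if_distrib cong: if_cong)
  also have "\<dots> = (\<Sum>w\<in>?P. of_int (sign w) * lmono (list_exponent (permute_list w k)))"
  proof -
    have "?a w \<in> ?I" for w
      using N k by (intro index_tuple_mem_idx_tuples) simp_all
    then show ?thesis
      by (simp add: finite_idx_tuples list_exponent_index_tuple_z_exponent[OF N])
  qed
  also have "\<dots> = ahat n k"
    by (simp add: ahat_eq[OF k])
  finally show ?thesis .
qed

lemma omega_eq_omega0: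
  fixes omega :: "tens \<Rightarrow> lpoly"
  assumes N: "N \<ge> 1"
    and omega_add: "\<And>f g. F_space N n f \<Longrightarrow> F_space N n g \<Longrightarrow> omega (\<lambda>a. f a + g a) = omega f + omega g"
    and omega_smult: "\<And>c f. F_space N n f \<Longrightarrow> omega (\<lambda>a. lconst c * f a) = lconst c * omega f"
    and omega_basis: "\<And>k. length k = n \<Longrightarrow> sorted_wrt (>) k \<Longrightarrow> omega (uhat N n k) = ahat n k"
    and f: "F_space N n f"
  shows "omega f = omega0 N n f"
proof -
  define K where "K = uhat_support N n f"
  define c where "c = tens_coeff N f"
  have f_eq: "f = (\<lambda>a. \<Sum>k\<in>K. lconst (c k) * uhat N n k a)"
    using F_space_eq_sum_uhat[OF N f] by (auto simp: K_def c_def)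
  have K: "length k = n" "sorted_wrt (>) k" if "k \<in> K" for k
    using that by (simp_all add: K_def uhat_support_def)
  have uhat: "F_space N n (uhat N n k)" if "k \<in> K" for k
    using F_space_uhat[OF N K(1)[OF that]] .
  have "omega f = (\<Sum>k\<in>K. lconst (c k) * omega (uhat N n k))"
    unfolding f_eq by (rule F_space_linear_sum) (auto intro: omega_add omega_smult uhat)
  also have "\<dots> = (\<Sum>k\<in>K. lconst (c k) * omega0 N n (uhat N n k))"
    using K by (simp add: omega_basis omega0_uhat[OF N])
  also have "\<dots> = omega0 N n f"
    unfolding f_eq by (rule F_space_linear_sum[symmetric]) (auto intro: omega0_add omega0_smult uhat)
  finally show ?thesis .
qed

theorem lemma4:
  fixes N n b :: nat and omega :: "tens \<Rightarrow> lpoly" and f g :: tens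
  assumes "N \<ge> 1" and "n \<ge> 1" and "b \<ge> 1"
    and omega_add: "\<And>f g. F_space N n f \<Longrightarrow> F_space N n g \<Longrightarrow> omega (\<lambda>a. f a + g a) = omega f + omega g"
    and omega_smult: "\<And>c f. F_space N n f \<Longrightarrow> omega (\<lambda>a. lconst c * f a) = lconst c * omega f"
    and omega_basis: "\<And>k. length k = n \<Longrightarrow> sorted_wrt (>) k \<Longrightarrow> omega (uhat N n k) = ahat n k"
    and "F_space N n f" and "F_space N n g"
  shows "ip' N b n f g = ipp N b n (omega f) (omega g)"
proof -
  have "omega f = omega0 N n f" "omega g = omega0 N n g"
    using omega_eq_omega0[OF \<open>N \<ge> 1\<close> omega_add omega_smult omega_basis] assms by blast+
  moreover have "tens_space N n f" "tens_space N n g"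
    using assms by (simp_all add: F_space_def)
  ultimately show ?thesis
    using \<open>N \<ge> 1\<close> by (simp add: ip'_eq_sum_constant_terms ipp_def constant_term_Nabla_omega0)
qed

end
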